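(* Let $\mathcal{R}$ be a set of records equipped with a record-merge operation $\oplus:\mathcal{R}\times\mathcal{R}\to\mathcal{R}$, and let $(\Phi,\prec)$ be the partially ordered set of execution phases described in the context. Let $\mathcal{W}$ be a wisdom library that is phase-correct, and let $p_1,\ldots,p_n\in\mathcal{W}$ ($n\ge 1$) be in valid phase order, i.e. $\phi(p_1)\prec\phi(p_2)\prec\cdots\prec\phi(p_n)$. Suppose each $p_i$ is individually correct: for all $x\in I_{p_i}$, $p_i(x)\in O_{p_i}$. Then the composed pipeline $P=p_1\mathbin{;}\cdots\mathbin{;}p_n$ is correct: for every $x\in I_{p_1}$, every intermediate input $x_i$ lies in $I_{p_i}$ (so the pipeline is well defined), and its output $P(x)=p_n(x_n)$ lies in $O_{p_n}$.
   Context: A wisdom program $p$ consists of an execution phase $\phi(p)\in\Phi$, an input schema $I_p\subseteq\mathcal{R}$, an output schema $O_p\subseteq\mathcal{R}$, and a function (its denotation) $x\mapsto p(x)$ defined on $I_p$ with values in $\mathcal{R}$. A wisdom library $\mathcal{W}$ is a finite set of wisdom programs. The phase set is $\Phi=\{\mathsf{pre},\mathsf{ctx},\mathsf{post},\mathsf{auto},\mathsf{render},\mathsf{rel},\mathsf{agg},\mathsf{idx}\}$, partially ordered by the order $\prec$ generated by $\mathsf{pre}\prec\mathsf{ctx}\prec\mathsf{agg}\prec\mathsf{post}\prec\mathsf{render}$, $\mathsf{rel}\prec\mathsf{agg}$, $\mathsf{post}\prec\mathsf{auto}$, with $\mathsf{idx}$ incomparable to all others. Sequential composition $p\mathbin{;}q$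 (for $\phi(p)\prec\phi(q)$) runs $p$ on input $x$ and then runs $q$ on the merged input $x\oplus p(x)$; here $\oplus$ is schema-compatible record merge (fields of $x$ are preserved and fields of $p(x)$ are added). Accordingly, the pipeline $p_1\mathbin{;}\cdots\mathbin{;}p_n$ on input $x$ is defined by $x_1=x$, $x_{i+1}=x_i\oplus p_i(x_i)$ for $1\le i<n$, with output $p_n(x_n)$. A wisdom library $\mathcal{W}$ is phase-correct if: (a) for every $p,q\in\mathcal{W}$ with $\phi(p)\prec\phi(q)$ and every $x\in I_p$, one has $x\oplus p(x)\in I_q$; (b) the aggregation program (phase $\mathsf{agg}$) accepts as input the union of all outputs of programs with phase $\prec\mathsf{agg}$; and (c) the rendering programs (phase $\mathsf{render}$) accept the output of the aggregation program as input. *)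

theory Defs
  imports Main
begin

datatype phase = Pre | Ctx | Post | Auto | Render | Rel | Agg | Idx

definition phase_gen :: "(phase \<times> phase) set" where
  "phase_gen = {(Pre, Ctx), (Ctx, Agg), (Agg, Post), (Post, Render), (Rel, Agg), (Post, Auto)}"

definition phase_less :: "phase \<Rightarrow> phase \<Rightarrow> bool" (infix "\<prec>" 50) where
  "p \<prec> q \<longleftrightarrow> (p, q) \<in> phase_gen\<^sup>+"

record 'r wprog =
  phase :: phase
  inp :: "'r set"
  outp :: "'r set"
  den :: "'r \<Rightarrow> 'r"

text \<open>Phase-correctness of a library W w.r.t. the record merge operation m (the \<oplus>).\<close>
definition phase_correct :: "('r \<Rightarrow> 'r \<Rightarrow> 'r) \<Rightarrow> 'r wprog set \<Rightarrow> bool" where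
  "phase_correct m W \<longleftrightarrow>
     (\<forall>p\<in>W. \<forall>q\<in>W. phase p \<prec> phase q \<longrightarrow> (\<forall>x\<in>inp p. m x (den p x) \<in> inp q))
   \<and> (\<forall>a\<in>W. phase a = Agg \<longrightarrow> (\<Union>{outp p | p. p \<in> W \<and> phase p \<prec> Agg}) \<subseteq> inp a)
   \<and> (\<forall>a\<in>W. \<forall>r\<in>W. phase a = Agg \<and> phase r = Render \<longrightarrow> outp a \<subseteq> inp r)"

text \<open>Intermediate inputs (0-indexed): state 0 = x, state (k+1) = state k \<oplus> p_k(state k).\<close>
fun pipe_state :: "('r \<Rightarrow> 'r \<Rightarrow> 'r) \<Rightarrow> 'r wprog list \<Rightarrow> 'r \<Rightarrow> nat \<Rightarrow> 'r" where
  "pipe_state m ps x 0 = x"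
| "pipe_state m ps x (Suc k) = m (pipe_state m ps x k) (den (ps ! k) (pipe_state m ps x k))"

definition pipe_out :: "('r \<Rightarrow> 'r \<Rightarrow> 'r) \<Rightarrow> 'r wprog list \<Rightarrow> 'r \<Rightarrow> 'r" where
  "pipe_out m ps x = den (last ps) (pipe_state m ps x (length ps - 1))"

end

theory Submission
  imports Defs
begin

text \<open>Only clause (a) of phase-correctness is needed: since consecutive programs are in
  phase order, each merged state \<open>x\<^sub>i \<oplus> p\<^sub>i(x\<^sub>i)\<close> is accepted by \<open>p\<^sub>i\<^sub>+\<^sub>1\<close>, so by induction every
  intermediate input is admissible, and the last program's individual correctness gives
  the output schema.\<close>

definition merge_compatible :: "('r \<Rightarrow> 'r \<Rightarrow> 'r) \<Rightarrow> 'r wprog \<Rightarrow> 'r wprog \<Rightarrow> bool" where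
  "merge_compatible m p q \<longleftrightarrow> (\<forall>x\<in>inp p. m x (den p x) \<in> inp q)"

lemma phase_correct_merge_compatible:
  assumes "phase_correct m W" "p \<in> W" "q \<in> W" "phase p \<prec> phase q"
  shows "merge_compatible m p q"
proof -
  have "\<forall>p\<in>W. \<forall>q\<in>W. phase p \<prec> phase q \<longrightarrow> merge_compatible m p q"
    using \<open>phase_correct m W\<close> unfolding phase_correct_def merge_compatible_def by (rule conjunct1)
  with assms(2-4) show ?thesis by blast
qed

lemma pipe_state_in_inp:
  assumes compatible: "\<And>i. Suc i < length ps \<Longrightarrow> merge_compatible m (ps ! i) (ps ! Suc i)"
    and start: "x \<in> inp (hd ps)"
    and "i < length ps"
  shows "pipe_state m ps x i \<in> inp (ps ! i)"
  using \<open>i < length ps\<close>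
proof (induction i)
  case 0
  then show ?case using start by (simp add: hd_conv_nth)
next
  case (Suc i)
  then have "pipe_state m ps x i \<in> inp (ps ! i)" by simp
  with compatible[OF Suc.prems] show ?case
    unfolding merge_compatible_def by simp
qed

theorem theorem4p2:
  fixes m :: "'r \<Rightarrow> 'r \<Rightarrow> 'r" and W :: "'r wprog set" and ps :: "'r wprog list"
  assumes "finite W"
    and "phase_correct m W"
    and "ps \<noteq> []"
    and "set ps \<subseteq> W"
    and "\<forall>i. Suc i < length ps \<longrightarrow> phase (ps ! i) \<prec> phase (ps ! Suc i)"
    and "\<forall>i<length ps. \<forall>x\<in>inp (ps ! i). den (ps ! i) x \<in> outp (ps ! i)"
    and "x \<in> inp (hd ps)"
  shows "(\<forall>i<length ps. pipe_state m ps x i \<in> inp (ps ! i)) \<and> pipe_out m ps x \<in> outp (last ps)"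
proof -
  have "merge_compatible m (ps ! i) (ps ! Suc i)" if "Suc i < length ps" for i
  proof (rule phase_correct_merge_compatible[OF assms(2)])
    show "ps ! i \<in> W" "ps ! Suc i \<in> W"
      using assms(4) that by (simp_all add: subsetD)
    show "phase (ps ! i) \<prec> phase (ps ! Suc i)"
      using assms(5) that by simp
  qed
  then have states: "\<forall>i<length ps. pipe_state m ps x i \<in> inp (ps ! i)"
    using pipe_state_in_inp[OF _ assms(7)] by simp
  define n where "n = length ps - 1"
  have "n < length ps" "last ps = ps ! n"
    using assms(3) by (simp_all add: n_def last_conv_nth)
  then have "pipe_out m ps x \<in> outp (last ps)"
    using states assms(6) by (simp add: pipe_out_def n_def)
  with states show ?thesis by (rule conjI)
qed

end
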